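(* There exists a finite set $C\subseteq\mathbb{M}$ such that $\mathrm{ChrMem}(\mathrm{RL}\cap C^\omega)=+\infty$.
   Context: Let $\Omega=\mathbb{N}\times\{0,1\}$ with partial order $(n,a)\preceq(m,b)$ iff $(n,a)=(m,b)$ or $n<m$. Let $\mathbb{M}$ be the set of all functions $f\colon\Omega\to\Omega$ monotone w.r.t. $\preceq$. The Rope Ladder condition $\mathrm{RL}\subseteq\mathbb{M}^\omega$ consists of all sequences $(f_1,f_2,\ldots)\in\mathbb{M}^\omega$ for which there is $(N,b)\in\Omega$ with $f_n\circ\cdots\circ f_1((0,0))\preceq(N,b)$ for all $n\ge1$. For $C\subseteq\mathbb{M}$, $\mathrm{RL}\cap C^\omega$ is regarded as a winning condition over the color set $C$. An arena over a color set $C$ is a tuple $\langle V_P, V_A, E\rangle$ of finite sets with $V_P\cap V_A=\varnothing$, $V=V_P\cup V_A\neq\varnothing$, $E\subseteq V\times C\times V$, every node having an outgoing edge. Paths are non-empty finite/infinite sequences of consecutive edges, plus $0$-length paths $\lambda_v$ at each node. A Protagonist's strategy maps each finite path ending in $V_P$ to an outgoing edge of its last node; a path is consistent with $S$ if every edge leaving a Protagonist node along it is the one chosen by $S$ on the preceding prefix. $S$ is winning from $u$ w.r.t. $W\subseteq C^\omega$ if every infinite path consistent with $S$ from $u$ has color sequence in $W$; $S$ is optimal w.r.t. $W$ if there is no node from which some strategy wins w.r.t. $W$ but $S$ does not. A memory structure is $\langle M,m_{init},\delta\rangle$ with $M$ finite, $\delta\colon M\times E\to M$ (extended to finite edge sequences);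 it is chromatic if $\delta(m,e_1)=\delta(m,e_2)$ whenever $e_1,e_2$ have the same color. A strategy is built on top of it if its choice after a finite path depends only on the last node and the memory state reached from $m_{init}$ on that path. $\mathrm{ChrMem}(W)$ is the least $k\in\mathbb{Z}^+$ such that every arena over $C$ admits a Protagonist's strategy built on top of a chromatic memory structure with $k$ states that is optimal w.r.t. $W$ ($+\infty$ if none exists). *)

theory Defs
  imports Main "HOL-Library.Extended_Nat"
begin

type_synonym omega = "nat \<times> bool"   (* (n,False) = (n,0), (n,True) = (n,1) *)

definition oleq :: "omega \<Rightarrow> omega \<Rightarrow> bool" where
  "oleq x y \<longleftrightarrow> x = y \<or> fst x < fst y"

definition MonoFun :: "(omega \<Rightarrow> omega) set" where
  "MonoFun = {f. \<forall>x y. oleq x y \<longrightarrow> oleq (f x) (f y)}"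

(* comp_seq s n x = f_n o ... o f_1 x, where f_{i+1} = s i *)
primrec comp_seq :: "(nat \<Rightarrow> (omega \<Rightarrow> omega)) \<Rightarrow> nat \<Rightarrow> omega \<Rightarrow> omega" where
  "comp_seq s 0 x = x"
| "comp_seq s (Suc n) x = s n (comp_seq s n x)"

definition RL :: "(nat \<Rightarrow> (omega \<Rightarrow> omega)) set" where
  "RL = {s. (\<forall>i. s i \<in> MonoFun) \<and>
            (\<exists>N b. \<forall>n\<ge>1. oleq (comp_seq s n (0, False)) (N, b))}"

definition omega_seqs :: "'c set \<Rightarrow> (nat \<Rightarrow> 'c) set" where
  "omega_seqs C = {s. \<forall>i. s i \<in> C}"

(* nodes are natural numbers (every finite arena is isomorphic to one of this form) *)
type_synonym 'c edge = "nat \<times> 'c \<times> nat"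

record 'c arena =
  VP :: "nat set"
  VA :: "nat set"
  Ed :: "'c edge set"

definition nodes :: "'c arena \<Rightarrow> nat set" where
  "nodes A = VP A \<union> VA A"

definition src :: "'c edge \<Rightarrow> nat" where "src e = fst e"
definition col :: "'c edge \<Rightarrow> 'c" where "col e = fst (snd e)"
definition tgt :: "'c edge \<Rightarrow> nat" where "tgt e = snd (snd e)"

definition is_arena :: "'c set \<Rightarrow> 'c arena \<Rightarrow> bool" where
  "is_arena C A \<longleftrightarrow> finite (VP A) \<and> finite (VA A) \<and> finite (Ed A) \<and>
     VP A \<inter> VA A = {} \<and> nodes A \<noteq> {} \<and>
     Ed A \<subseteq> nodes A \<times> C \<times> nodes A \<and>
     (\<forall>v\<in>nodes A. \<exists>e\<in>Ed A. src e = v)"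

(* a finite path is a start node v with a list of consecutive edges;
   (v, []) is the 0-length path lambda_v *)
type_synonym 'c fpath = "nat \<times> 'c edge list"

definition is_fpath :: "'c arena \<Rightarrow> 'c fpath \<Rightarrow> bool" where
  "is_fpath A p \<longleftrightarrow> (case p of (v, es) \<Rightarrow>
      v \<in> nodes A \<and> set es \<subseteq> Ed A \<and>
      (es \<noteq> [] \<longrightarrow> src (hd es) = v) \<and>
      (\<forall>i. Suc i < length es \<longrightarrow> tgt (es ! i) = src (es ! Suc i)))"

definition last_node :: "'c fpath \<Rightarrow> nat" where
  "last_node p = (case p of (v, es) \<Rightarrow> if es = [] then v else tgt (last es))"

definition is_ipath :: "'c arena \<Rightarrow> nat \<Rightarrow> (nat \<Rightarrow> 'c edge) \<Rightarrow> bool" where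
  "is_ipath A u es \<longleftrightarrow> u \<in> nodes A \<and> (\<forall>i. es i \<in> Ed A) \<and> src (es 0) = u \<and>
      (\<forall>i. tgt (es i) = src (es (Suc i)))"

definition prefix :: "(nat \<Rightarrow> 'c edge) \<Rightarrow> nat \<Rightarrow> 'c edge list" where
  "prefix es n = map es [0..<n]"

type_synonym 'c strategy = "'c fpath \<Rightarrow> 'c edge"

definition is_strategy :: "'c arena \<Rightarrow> 'c strategy \<Rightarrow> bool" where
  "is_strategy A S \<longleftrightarrow> (\<forall>p. is_fpath A p \<and> last_node p \<in> VP A \<longrightarrow>
      S p \<in> Ed A \<and> src (S p) = last_node p)"

definition consistent_ipath :: "'c arena \<Rightarrow> 'c strategy \<Rightarrow> nat \<Rightarrow> (nat \<Rightarrow> 'c edge) \<Rightarrow> bool" where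
  "consistent_ipath A S u es \<longleftrightarrow> is_ipath A u es \<and>
      (\<forall>i. src (es i) \<in> VP A \<longrightarrow> es i = S (u, prefix es i))"

definition winning_from :: "'c arena \<Rightarrow> (nat \<Rightarrow> 'c) set \<Rightarrow> 'c strategy \<Rightarrow> nat \<Rightarrow> bool" where
  "winning_from A W S u \<longleftrightarrow>
     (\<forall>es. consistent_ipath A S u es \<longrightarrow> (\<lambda>i. col (es i)) \<in> W)"

definition optimal :: "'c arena \<Rightarrow> (nat \<Rightarrow> 'c) set \<Rightarrow> 'c strategy \<Rightarrow> bool" where
  "optimal A W S \<longleftrightarrow>
     \<not> (\<exists>u\<in>nodes A. (\<exists>S'. is_strategy A S' \<and> winning_from A W S' u) \<and> \<not> winning_from A W S u)"

definition is_memory :: "'c arena \<Rightarrow> nat set \<Rightarrow> nat \<Rightarrow> (nat \<Rightarrow> 'c edge \<Rightarrow> nat) \<Rightarrow> bool" where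
  "is_memory A M m0 \<delta> \<longleftrightarrow> finite M \<and> m0 \<in> M \<and> (\<forall>m\<in>M. \<forall>e\<in>Ed A. \<delta> m e \<in> M)"

definition chromatic :: "'c arena \<Rightarrow> nat set \<Rightarrow> (nat \<Rightarrow> 'c edge \<Rightarrow> nat) \<Rightarrow> bool" where
  "chromatic A M \<delta> \<longleftrightarrow>
     (\<forall>m\<in>M. \<forall>e1\<in>Ed A. \<forall>e2\<in>Ed A. col e1 = col e2 \<longrightarrow> \<delta> m e1 = \<delta> m e2)"

definition mem_after :: "nat \<Rightarrow> (nat \<Rightarrow> 'c edge \<Rightarrow> nat) \<Rightarrow> 'c fpath \<Rightarrow> nat" where
  "mem_after m0 \<delta> p = fold (\<lambda>e m. \<delta> m e) (snd p) m0"

definition built_on_top :: "'c arena \<Rightarrow> nat \<Rightarrow> (nat \<Rightarrow> 'c edge \<Rightarrow> nat) \<Rightarrow> 'c strategy \<Rightarrow> bool" where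
  "built_on_top A m0 \<delta> S \<longleftrightarrow>
     (\<forall>p q. is_fpath A p \<and> is_fpath A q \<and> last_node p \<in> VP A \<and>
            last_node p = last_node q \<and> mem_after m0 \<delta> p = mem_after m0 \<delta> q
            \<longrightarrow> S p = S q)"

definition chr_mem_ok :: "'c set \<Rightarrow> (nat \<Rightarrow> 'c) set \<Rightarrow> nat \<Rightarrow> bool" where
  "chr_mem_ok C W k \<longleftrightarrow>
     (\<forall>A. is_arena C A \<longrightarrow>
        (\<exists>M m0 \<delta> S. is_memory A M m0 \<delta> \<and> card M = k \<and> chromatic A M \<delta> \<and>
                    is_strategy A S \<and> built_on_top A m0 \<delta> S \<and> optimal A W S))"

definition ChrMem :: "'c set \<Rightarrow> (nat \<Rightarrow> 'c) set \<Rightarrow> enat" where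
  "ChrMem C W = (if \<exists>k>0. chr_mem_ok C W k
                 then enat (LEAST k. k > 0 \<and> chr_mem_ok C W k) else \<infinity>)"

end

theory Submission
  imports Defs
begin

(* Read from (0, False), the colours step_up^m, flip_at_pow2, step_down^(m-1) lead to
   (1, [m is a power of 2]); the next colour commit beta keeps the level at 1 if beta is that
   bit and otherwise moves to level 2, from where escape climbs forever.  In pow2_arena a b the
   Adversary picks a chain of length a or b, after which the Protagonist must commit to whether
   the length is a power of 2: easy with the full history.  A chromatic memory with k states,
   however, updates along a chain by iterating the maps of step_up and step_down, and after k
   steps their orbits repeat with a period dividing k!.  So for a = 2^(k!) and b = a + k! both
   chains lead to the same memory state, and a strategy built on the memory commits identically
   for a power of two and a non-power of two. *)

lemma funpow_in_invariant_set: "f ` M \<subseteq> M \<Longrightarrow> x \<in> M \<Longrightarrow> (f ^^ n) x \<in> M"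
  by (induction n) auto

lemma funpow_repeat_within_card:
  assumes "finite M" "f ` M \<subseteq> M" "x \<in> M"
  obtains p q where "p < q" "q \<le> card M" "(f ^^ q) x = (f ^^ p) x"
proof -
  have "(\<lambda>i. (f ^^ i) x) ` {0..card M} \<subseteq> M"
    using funpow_in_invariant_set[OF assms(2,3)] by blast
  then have "card ((\<lambda>i. (f ^^ i) x) ` {0..card M}) < card {0..card M}"
    using card_mono[OF \<open>finite M\<close>] by (simp add: le_imp_less_Suc)
  then have "\<not> inj_on (\<lambda>i. (f ^^ i) x) {0..card M}"
    by (rule pigeonhole)
  then obtain i j where "i \<le> card M" "j \<le> card M" "i \<noteq> j" "(f ^^ i) x = (f ^^ j) x"
    unfolding inj_on_def by auto
  then show ?thesis
    using that[of i j] that[of j i] by (cases "i < j") auto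
qed

lemma funpow_periodic_from:
  fixes f :: "'a \<Rightarrow> 'a"
  assumes "(f ^^ (p + d)) x = (f ^^ p) x" "p \<le> j"
  shows "(f ^^ (j + c * d)) x = (f ^^ j) x"
proof (induction c)
  case (Suc c)
  define r where "r = j + c * d - p"
  have "j + Suc c * d = r + (p + d)" "j + c * d = r + p"
    using assms(2) by (simp_all add: r_def)
  then have "(f ^^ (j + Suc c * d)) x = (f ^^ (j + c * d)) x"
    using assms(1) by (simp only: funpow_add[of r] comp_apply)
  then show ?case
    using Suc.IH by simp
qed simp

lemma funpow_fact_card_period:
  assumes "finite M" "f ` M \<subseteq> M" "x \<in> M" "card M \<le> j"
  shows "(f ^^ (j + fact (card M))) x = (f ^^ j) x"
proof -
  obtain p q where pq: "p < q" "q \<le> card M" "(f ^^ q) x = (f ^^ p) x"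
    using funpow_repeat_within_card assms(1-3) .
  then have "(q - p) dvd fact (card M)"
    by (intro dvd_fact) auto
  then obtain c where "fact (card M) = c * (q - p)"
    by (auto simp: dvd_def mult.commute)
  moreover have "(f ^^ (p + (q - p))) x = (f ^^ p) x"
    using pq by simp
  moreover have "p \<le> j"
    using pq assms(4) by simp
  ultimately show ?thesis
    using funpow_periodic_from[where p = p and d = "q - p"] by simp
qed

definition colour_step :: "'c arena \<Rightarrow> (nat \<Rightarrow> 'c edge \<Rightarrow> nat) \<Rightarrow> 'c \<Rightarrow> nat \<Rightarrow> nat" where
  "colour_step A \<delta> \<kappa> m = \<delta> m (SOME e. e \<in> Ed A \<and> col e = \<kappa>)"

lemma some_edge_of_colour:
  assumes "e \<in> Ed A"
  shows "(SOME e'. e' \<in> Ed A \<and> col e' = col e) \<in> Ed A \<and> col (SOME e'. e' \<in> Ed A \<and> col e' = col e) = col e"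
  using someI[of "\<lambda>e'. e' \<in> Ed A \<and> col e' = col e" e] assms by simp

lemma colour_step_in_memory:
  assumes "is_memory A M m0 \<delta>" "m \<in> M" "e \<in> Ed A"
  shows "colour_step A \<delta> (col e) m \<in> M"
  using assms some_edge_of_colour[OF assms(3)] unfolding colour_step_def is_memory_def by blast

lemma chromatic_fold_colours:
  assumes "is_memory A M m0 \<delta>" "chromatic A M \<delta>" "m \<in> M" "set es \<subseteq> Ed A"
  shows "fold (\<lambda>e m. \<delta> m e) es m = fold (colour_step A \<delta>) (map col es) m"
  using assms(3,4)
proof (induction es arbitrary: m)
  case (Cons e es)
  have "\<delta> m e = colour_step A \<delta> (col e) m"
    using assms(2) Cons.prems some_edge_of_colour[of e A]
    unfolding chromatic_def colour_step_def by simp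
  moreover have "\<delta> m e \<in> M"
    using assms(1) Cons.prems unfolding is_memory_def by simp
  ultimately show ?case
    using Cons by simp
qed simp

definition is_pow2 :: "nat \<Rightarrow> bool" where
  "is_pow2 n \<longleftrightarrow> (\<exists>j. n = 2 ^ j)"

lemma not_is_pow2_between:
  assumes "2 ^ L < n" "n < 2 ^ Suc L"
  shows "\<not> is_pow2 n"
proof
  assume "is_pow2 n"
  then obtain j where "n = 2 ^ j"
    by (auto simp: is_pow2_def)
  then have "L < j" "j < Suc L"
    using assms by (simp_all add: power_strict_increasing_iff del: power_Suc)
  then show False
    by simp
qed

definition step_up :: "omega \<Rightarrow> omega" where
  "step_up x = (Suc (fst x), snd x)"

definition flip_at_pow2 :: "omega \<Rightarrow> omega" where
  "flip_at_pow2 x = (fst x, snd x \<noteq> is_pow2 (fst x))"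

(* Levels 0 and 1 both go to (0, False): the plain predecessor would send (0, False) and
   (1, True) to the incomparable points (0, False) and (0, True). *)
definition step_down :: "omega \<Rightarrow> omega" where
  "step_down x = (if 2 \<le> fst x then (fst x - 1, snd x) else (0, False))"

definition commit :: "bool \<Rightarrow> omega \<Rightarrow> omega" where
  "commit \<beta> x = (if snd x = \<beta> then fst x else Suc (fst x), False)"

definition escape :: "omega \<Rightarrow> omega" where
  "escape x = (if fst x \<le> 1 then x else (Suc (fst x), snd x))"

definition pow2_colours :: "(omega \<Rightarrow> omega) set" where
  "pow2_colours = {step_up, flip_at_pow2, step_down, commit False, commit True, escape}"

lemma pow2_colours_mono: "pow2_colours \<subseteq> MonoFun"
  unfolding pow2_colours_def MonoFun_def oleq_def
  by (auto simp: step_up_def flip_at_pow2_def step_down_def commit_def escape_def)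

definition chain_colour :: "nat \<Rightarrow> nat \<Rightarrow> omega \<Rightarrow> omega" where
  "chain_colour m i = (if i < m then step_up else if i = m then flip_at_pow2 else step_down)"

definition play_colours :: "nat \<Rightarrow> bool \<Rightarrow> nat \<Rightarrow> omega \<Rightarrow> omega" where
  "play_colours m \<beta> i =
     (if i < 2 * m then chain_colour m i else if i = 2 * m then commit \<beta> else escape)"

lemma commit_eq_iff: "commit \<beta> = commit \<beta>' \<longleftrightarrow> \<beta> = \<beta>'"
proof
  assume "commit \<beta> = commit \<beta>'"
  then have "commit \<beta> (0, \<beta>) = commit \<beta>' (0, \<beta>)"
    by simp
  then show "\<beta> = \<beta>'"
    by (auto simp: commit_def split: if_splits)
qed simp

lemma chain_colour_in_pow2_colours: "chain_colour m i \<in> pow2_colours"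
  by (simp add: chain_colour_def pow2_colours_def)

lemma commit_in_pow2_colours: "commit \<beta> \<in> pow2_colours"
  by (cases \<beta>) (simp_all add: pow2_colours_def)

lemma play_colours_in_pow2_colours: "play_colours m \<beta> i \<in> pow2_colours"
  unfolding play_colours_def
  by (simp add: chain_colour_in_pow2_colours commit_in_pow2_colours) (simp add: pow2_colours_def)

lemma comp_seq_play_colours:
  assumes "1 \<le> m"
  shows "comp_seq (play_colours m \<beta>) n (0, False) =
    (if n \<le> m then (n, False)
     else if n \<le> 2 * m then (2 * m + 1 - n, is_pow2 m)
     else if \<beta> = is_pow2 m then (1, False) else (n + 1 - 2 * m, False))"
proof (induction n)
  case (Suc n)
  then show ?case
    using assms
    by (auto simp: play_colours_def chain_colour_def step_up_def flip_at_pow2_def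
        step_down_def commit_def escape_def)
qed simp

lemma play_colours_in_RL_iff:
  assumes "1 \<le> m"
  shows "play_colours m \<beta> \<in> RL \<longleftrightarrow> \<beta> = is_pow2 m"
proof
  assume "play_colours m \<beta> \<in> RL"
  then obtain N b where bound: "oleq (comp_seq (play_colours m \<beta>) (2 * m + N + 1) (0, False)) (N, b)"
    unfolding RL_def by fastforce
  show "\<beta> = is_pow2 m"
  proof (rule ccontr)
    assume "\<beta> \<noteq> is_pow2 m"
    then show False
      using bound assms by (simp only: comp_seq_play_colours) (simp add: oleq_def)
  qed
next
  assume "\<beta> = is_pow2 m"
  then have "oleq (comp_seq (play_colours m \<beta>) n (0, False)) (Suc m, False)" for n
    using assms by (auto simp: comp_seq_play_colours oleq_def)
  moreover have "play_colours m \<beta> i \<in> MonoFun" for i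
    using play_colours_in_pow2_colours pow2_colours_mono by blast
  ultimately show "play_colours m \<beta> \<in> RL"
    unfolding RL_def by blast
qed

definition chain_len :: "nat \<Rightarrow> nat \<Rightarrow> bool \<Rightarrow> nat" where
  "chain_len a b c = (if c then b else a)"

(* Node 0 is the Adversary's start, 1 the Protagonist's choice node and 2 the sink; the inner
   chain nodes are all at least 4. *)
definition chain_node :: "nat \<Rightarrow> nat \<Rightarrow> bool \<Rightarrow> nat \<Rightarrow> nat" where
  "chain_node a b c i =
     (if i = 0 then 0 else if i = 2 * chain_len a b c then 1 else 2 * i + of_bool c + 2)"

definition chain_edge :: "nat \<Rightarrow> nat \<Rightarrow> bool \<Rightarrow> nat \<Rightarrow> (omega \<Rightarrow> omega) edge" where
  "chain_edge a b c i =
     (chain_node a b c i, chain_colour (chain_len a b c) i, chain_node a b c (Suc i))"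

definition chain_path :: "nat \<Rightarrow> nat \<Rightarrow> bool \<Rightarrow> (omega \<Rightarrow> omega) edge list" where
  "chain_path a b c = map (chain_edge a b c) [0..<2 * chain_len a b c]"

definition pow2_arena :: "nat \<Rightarrow> nat \<Rightarrow> (omega \<Rightarrow> omega) arena" where
  "pow2_arena a b =
     \<lparr>VP = {1},
      VA = {0, 2} \<union> (\<Union>c. chain_node a b c ` {0<..<2 * chain_len a b c}),
      Ed = (\<Union>c. chain_edge a b c ` {..<2 * chain_len a b c}) \<union>
           range (\<lambda>\<beta>. (1, commit \<beta>, 2)) \<union> {(2, escape, 2)}\<rparr>"

definition pow2_play :: "nat \<Rightarrow> nat \<Rightarrow> bool \<Rightarrow> bool \<Rightarrow> nat \<Rightarrow> (omega \<Rightarrow> omega) edge" where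
  "pow2_play a b c \<beta> i =
     (if i < 2 * chain_len a b c then chain_edge a b c i
      else if i = 2 * chain_len a b c then (1, commit \<beta>, 2) else (2, escape, 2))"

lemma chain_node_start [simp]: "chain_node a b c 0 = 0"
  by (simp add: chain_node_def)

lemma chain_node_end [simp]: "0 < chain_len a b c \<Longrightarrow> chain_node a b c (2 * chain_len a b c) = 1"
  by (simp add: chain_node_def)

lemma chain_node_inner:
  "0 < i \<Longrightarrow> i < 2 * chain_len a b c \<Longrightarrow> chain_node a b c i = 2 * i + of_bool c + 2"
  by (simp add: chain_node_def)

lemma chain_node_inner_inj:
  assumes "0 < i" "i < 2 * chain_len a b c" "0 < j" "j < 2 * chain_len a b c'"
    and "chain_node a b c i = chain_node a b c' j"
  shows "c = c' \<and> i = j"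
  using assms by (cases c; cases c') (simp_all add: chain_node_inner, presburger+)

lemma edge_selectors [simp]: "src (v, \<kappa>, w) = v" "col (v, \<kappa>, w) = \<kappa>" "tgt (v, \<kappa>, w) = w"
  by (simp_all add: src_def col_def tgt_def)

lemma src_chain_edge [simp]: "src (chain_edge a b c i) = chain_node a b c i"
  and tgt_chain_edge [simp]: "tgt (chain_edge a b c i) = chain_node a b c (Suc i)"
  and col_chain_edge [simp]: "col (chain_edge a b c i) = chain_colour (chain_len a b c) i"
  by (simp_all add: src_def tgt_def col_def chain_edge_def)

lemma chain_node_before_end:
  assumes "i < 2 * chain_len a b c"
  shows "chain_node a b c i \<noteq> 1" "chain_node a b c i \<noteq> 2" "chain_node a b c i = 0 \<longleftrightarrow> i = 0"
  using assms by (simp_all add: chain_node_def)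

lemma nodes_pow2_arena:
  "nodes (pow2_arena a b) = {0, 1, 2} \<union> (\<Union>c. chain_node a b c ` {0<..<2 * chain_len a b c})"
  unfolding nodes_def pow2_arena_def by auto

lemma chain_node_in_nodes:
  assumes "i \<le> 2 * chain_len a b c" "0 < chain_len a b c"
  shows "chain_node a b c i \<in> nodes (pow2_arena a b)"
proof -
  consider "i = 0" | "i = 2 * chain_len a b c" | "i \<in> {0<..<2 * chain_len a b c}"
    using assms(1) by fastforce
  then show ?thesis
    unfolding nodes_pow2_arena using assms(2) by cases (simp, simp, blast)
qed

lemma chain_edge_in_edges: "i < 2 * chain_len a b c \<Longrightarrow> chain_edge a b c i \<in> Ed (pow2_arena a b)"
  by (auto simp: pow2_arena_def)

lemma pow2_arena_edge_cases:
  assumes "e \<in> Ed (pow2_arena a b)"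
  obtains c i where "i < 2 * chain_len a b c" "e = chain_edge a b c i"
  | \<beta> where "e = (1, commit \<beta>, 2)"
  | "e = (2, escape, 2)"
  using assms unfolding pow2_arena_def by auto

lemma pow2_arena_edges_subset:
  assumes "0 < a" "0 < b"
  shows "Ed (pow2_arena a b) \<subseteq> nodes (pow2_arena a b) \<times> pow2_colours \<times> nodes (pow2_arena a b)"
proof
  fix e
  assume "e \<in> Ed (pow2_arena a b)"
  then show "e \<in> nodes (pow2_arena a b) \<times> pow2_colours \<times> nodes (pow2_arena a b)"
  proof (cases rule: pow2_arena_edge_cases)
    case (1 c i)
    moreover have "0 < chain_len a b c"
      using assms by (simp add: chain_len_def)
    ultimately show ?thesis
      using chain_node_in_nodes[of i a b c] chain_node_in_nodes[of "Suc i" a b c]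
        chain_colour_in_pow2_colours
      by (simp add: chain_edge_def)
  next
    case 2
    then show ?thesis
      using commit_in_pow2_colours by (simp add: nodes_pow2_arena)
  next
    case 3
    then show ?thesis
      by (simp add: nodes_pow2_arena pow2_colours_def)
  qed
qed

lemma pow2_arena_out_edge:
  assumes "0 < a" "0 < b" "v \<in> nodes (pow2_arena a b)"
  shows "\<exists>e\<in>Ed (pow2_arena a b). src e = v"
proof -
  consider "v = 0" | "v = 1" | "v = 2"
    | c i where "0 < i" "i < 2 * chain_len a b c" "v = chain_node a b c i"
    using assms(3) unfolding nodes_pow2_arena by auto
  then show ?thesis
  proof cases
    case 1
    moreover have "chain_edge a b False 0 \<in> Ed (pow2_arena a b)"
      using assms by (intro chain_edge_in_edges) (simp add: chain_len_def)
    ultimately show ?thesis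
      by (intro bexI[of _ "chain_edge a b False 0"]) simp_all
  next
    case 2
    then show ?thesis
      by (intro bexI[of _ "(1, commit False, 2)"]) (simp_all add: pow2_arena_def)
  next
    case 3
    then show ?thesis
      by (intro bexI[of _ "(2, escape, 2)"]) (simp_all add: pow2_arena_def)
  next
    case (4 c i)
    then show ?thesis
      using chain_edge_in_edges[of i a b c] by (intro bexI[of _ "chain_edge a b c i"]) simp_all
  qed
qed

lemma pow2_arena_is_arena:
  assumes "0 < a" "0 < b"
  shows "is_arena pow2_colours (pow2_arena a b)"
proof -
  have "1 \<notin> chain_node a b c ` {0<..<2 * chain_len a b c}" for c
    by (auto simp: chain_node_inner)
  then have "VP (pow2_arena a b) \<inter> VA (pow2_arena a b) = {}"
    unfolding pow2_arena_def by simp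
  moreover have "finite (VA (pow2_arena a b))" "finite (Ed (pow2_arena a b))"
    by (simp_all add: pow2_arena_def)
  ultimately show ?thesis
    unfolding is_arena_def using pow2_arena_edges_subset[OF assms] pow2_arena_out_edge[OF assms]
    by (simp add: nodes_pow2_arena) (simp add: pow2_arena_def)
qed

lemma edge_from_start:
  assumes "e \<in> Ed (pow2_arena a b)" "src e = 0"
  obtains c where "e = chain_edge a b c 0"
  using assms by (cases rule: pow2_arena_edge_cases) (auto simp: chain_node_before_end)

lemma edge_from_inner_node:
  assumes "e \<in> Ed (pow2_arena a b)" "0 < i" "i < 2 * chain_len a b c" "src e = chain_node a b c i"
  shows "e = chain_edge a b c i"
  using assms(1)
proof (cases rule: pow2_arena_edge_cases)
  case (1 c' i')
  then show ?thesis
    using assms chain_node_inner_inj[of i' a b c' i c] chain_node_before_end(3)[of i' a b c']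
      chain_node_before_end(3)[of i a b c]
    by auto
qed (use assms chain_node_before_end in auto)

lemma edge_from_choice:
  assumes "e \<in> Ed (pow2_arena a b)" "src e = 1"
  obtains \<beta> where "e = (1, commit \<beta>, 2)"
  using assms by (cases rule: pow2_arena_edge_cases) (auto dest: chain_node_before_end(1))

lemma edge_from_sink:
  assumes "e \<in> Ed (pow2_arena a b)" "src e = 2"
  shows "e = (2, escape, 2)"
  using assms by (cases rule: pow2_arena_edge_cases) (auto simp: chain_node_before_end)

lemma src_pow2_play:
  "0 < chain_len a b c \<Longrightarrow> src (pow2_play a b c \<beta> i) =
     (if i < 2 * chain_len a b c then chain_node a b c i else if i = 2 * chain_len a b c then 1 else 2)"
  by (simp add: pow2_play_def)

lemma pow2_play_is_ipath:
  assumes "0 < a" "0 < b"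
  shows "is_ipath (pow2_arena a b) 0 (pow2_play a b c \<beta>)"
proof -
  have len: "0 < chain_len a b c"
    using assms by (simp add: chain_len_def)
  have "pow2_play a b c \<beta> i \<in> Ed (pow2_arena a b)" for i
    using chain_edge_in_edges by (auto simp: pow2_play_def pow2_arena_def)
  moreover have "tgt (pow2_play a b c \<beta> i) = src (pow2_play a b c \<beta> (Suc i))" for i
    using len by (auto simp: src_pow2_play) (auto simp: pow2_play_def chain_node_def)
  ultimately show ?thesis
    unfolding is_ipath_def using len by (simp add: src_pow2_play nodes_pow2_arena)
qed

lemma ipath_follows_chain:
  assumes path: "is_ipath (pow2_arena a b) u es" and first: "es 0 = chain_edge a b c 0"
  shows "i < 2 * chain_len a b c \<Longrightarrow> es i = chain_edge a b c i"
proof (induction i)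
  case (Suc i)
  have "src (es (Suc i)) = tgt (es i)"
    using path by (simp add: is_ipath_def)
  also have "\<dots> = chain_node a b c (Suc i)"
    using Suc by simp
  finally show ?case
    using path Suc.prems by (intro edge_from_inner_node) (simp_all add: is_ipath_def)
qed (simp add: first)

lemma ipath_stays_in_sink:
  assumes path: "is_ipath (pow2_arena a b) u es" and "src (es n) = 2"
  shows "es (n + j) = (2, escape, 2)"
proof (induction j)
  case 0
  have "es n \<in> Ed (pow2_arena a b)"
    using path by (simp add: is_ipath_def)
  then show ?case
    using edge_from_sink assms(2) by simp
next
  case (Suc j)
  have "src (es (Suc (n + j))) = tgt (es (n + j))"
    using path by (simp add: is_ipath_def)
  then have "src (es (Suc (n + j))) = 2"
    using Suc.IH by simp
  moreover have "es (Suc (n + j)) \<in> Ed (pow2_arena a b)"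
    using path by (simp add: is_ipath_def)
  ultimately show ?case
    using edge_from_sink by simp
qed

lemma ipath_pow2_arena_is_play:
  assumes "0 < a" "0 < b" and path: "is_ipath (pow2_arena a b) 0 es"
  obtains c \<beta> where "es = pow2_play a b c \<beta>"
proof -
  have edge: "es i \<in> Ed (pow2_arena a b)" and link: "tgt (es i) = src (es (Suc i))" for i
    using path by (simp_all add: is_ipath_def)
  have "src (es 0) = 0"
    using path by (simp add: is_ipath_def)
  then obtain c where first: "es 0 = chain_edge a b c 0"
    using edge_from_start[OF edge] by blast
  define m where "m = chain_len a b c"
  have "0 < m"
    using assms by (simp add: m_def chain_len_def)
  note chain = ipath_follows_chain[OF path first, folded m_def]
  have "src (es (2 * m)) = 1"
    using link[of "2 * m - 1"] chain[of "2 * m - 1"] \<open>0 < m\<close> by (simp add: m_def)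
  then obtain \<beta> where choice: "es (2 * m) = (1, commit \<beta>, 2)"
    using edge_from_choice[OF edge] by blast
  then have "src (es (Suc (2 * m))) = 2"
    using link[of "2 * m"] by simp
  note sink = ipath_stays_in_sink[OF path this]
  have "es i = pow2_play a b c \<beta> i" for i
  proof -
    consider "i < 2 * m" | "i = 2 * m" | "2 * m < i"
      by linarith
    then show ?thesis
    proof cases
      case 3
      then show ?thesis
        using sink[of "i - Suc (2 * m)"] by (simp add: pow2_play_def flip: m_def)
    qed (simp_all add: chain choice pow2_play_def flip: m_def)
  qed
  then show ?thesis
    using that by blast
qed

lemma prefix_pow2_play: "prefix (pow2_play a b c \<beta>) (2 * chain_len a b c) = chain_path a b c"
  by (simp add: prefix_def chain_path_def pow2_play_def)

lemma consistent_pow2_play_iff: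
  assumes "0 < a" "0 < b"
  shows "consistent_ipath (pow2_arena a b) S 0 (pow2_play a b c \<beta>) \<longleftrightarrow>
    S (0, chain_path a b c) = (1, commit \<beta>, 2)"
proof -
  let ?es = "pow2_play a b c \<beta>" and ?n = "2 * chain_len a b c"
  have len: "0 < chain_len a b c"
    using assms by (simp add: chain_len_def)
  have "src (?es i) \<in> VP (pow2_arena a b) \<longleftrightarrow> i = ?n" for i
    using len chain_node_before_end(1)[of i a b c] by (simp add: src_pow2_play pow2_arena_def)
  then have "(\<forall>i. src (?es i) \<in> VP (pow2_arena a b) \<longrightarrow> ?es i = S (0, prefix ?es i)) \<longleftrightarrow>
      ?es ?n = S (0, prefix ?es ?n)"
    by simp
  also have "\<dots> \<longleftrightarrow> S (0, chain_path a b c) = (1, commit \<beta>, 2)"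
    by (auto simp: prefix_pow2_play pow2_play_def)
  finally show ?thesis
    unfolding consistent_ipath_def using pow2_play_is_ipath[OF assms] by blast
qed

lemma col_pow2_play: "(\<lambda>i. col (pow2_play a b c \<beta> i)) = play_colours (chain_len a b c) \<beta>"
  by (simp add: pow2_play_def play_colours_def fun_eq_iff)

lemma winning_from_pow2_arena_iff:
  assumes "0 < a" "0 < b"
  shows "winning_from (pow2_arena a b) (RL \<inter> omega_seqs pow2_colours) S 0 \<longleftrightarrow>
    (\<forall>c \<beta>. S (0, chain_path a b c) = (1, commit \<beta>, 2) \<longrightarrow> \<beta> = is_pow2 (chain_len a b c))"
    (is "?winning \<longleftrightarrow> ?correct")
proof -
  have len: "1 \<le> chain_len a b c" for c
    using assms by (simp add: chain_len_def)
  have consistent_iff: "consistent_ipath (pow2_arena a b) S 0 es \<longleftrightarrow>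
      (\<exists>c \<beta>. es = pow2_play a b c \<beta> \<and> S (0, chain_path a b c) = (1, commit \<beta>, 2))" for es
  proof
    assume consistent: "consistent_ipath (pow2_arena a b) S 0 es"
    then obtain c \<beta> where "es = pow2_play a b c \<beta>"
      using ipath_pow2_arena_is_play[OF assms] unfolding consistent_ipath_def by blast
    then show "\<exists>c \<beta>. es = pow2_play a b c \<beta> \<and> S (0, chain_path a b c) = (1, commit \<beta>, 2)"
      using consistent consistent_pow2_play_iff[OF assms] by blast
  qed (use consistent_pow2_play_iff[OF assms] in blast)
  have "?winning \<longleftrightarrow> (\<forall>c \<beta>. S (0, chain_path a b c) = (1, commit \<beta>, 2) \<longrightarrow>
      (\<lambda>i. col (pow2_play a b c \<beta> i)) \<in> RL \<inter> omega_seqs pow2_colours)"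
    unfolding winning_from_def consistent_iff by blast
  also have "\<dots> \<longleftrightarrow> (\<forall>c \<beta>. S (0, chain_path a b c) = (1, commit \<beta>, 2) \<longrightarrow>
      play_colours (chain_len a b c) \<beta> \<in> RL \<inter> omega_seqs pow2_colours)"
    by (simp only: col_pow2_play)
  moreover have "play_colours (chain_len a b c) \<beta> \<in> RL \<inter> omega_seqs pow2_colours \<longleftrightarrow>
      \<beta> = is_pow2 (chain_len a b c)" for c \<beta>
    using play_colours_in_RL_iff[OF len] play_colours_in_pow2_colours
    by (simp add: omega_seqs_def)
  ultimately show ?thesis
    by simp
qed

lemma length_chain_path [simp]: "length (chain_path a b c) = 2 * chain_len a b c"
  by (simp add: chain_path_def)

lemma chain_path_is_fpath:
  assumes "0 < a" "0 < b"
  shows "is_fpath (pow2_arena a b) (0, chain_path a b c)"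
    and "last_node (0, chain_path a b c) = 1"
proof -
  have len: "0 < chain_len a b c"
    using assms by (simp add: chain_len_def)
  then have "hd (chain_path a b c) = chain_edge a b c 0"
    by (simp add: chain_path_def hd_map)
  moreover have "set (chain_path a b c) \<subseteq> Ed (pow2_arena a b)"
    using chain_edge_in_edges by (auto simp: chain_path_def)
  ultimately show "is_fpath (pow2_arena a b) (0, chain_path a b c)"
    unfolding is_fpath_def using len by (simp add: nodes_pow2_arena chain_path_def)
  have "last (chain_path a b c) = chain_edge a b c (2 * chain_len a b c - 1)"
    using len by (simp add: chain_path_def last_map)
  then show "last_node (0, chain_path a b c) = 1"
    unfolding last_node_def using len by (simp add: chain_path_def)
qed

lemma pow2_arena_winnable:
  assumes "0 < a" "0 < b"
  obtains S where "is_strategy (pow2_arena a b) S"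
    and "winning_from (pow2_arena a b) (RL \<inter> omega_seqs pow2_colours) S 0"
proof
  let ?S = "\<lambda>p :: (omega \<Rightarrow> omega) fpath. (1, commit (is_pow2 (length (snd p) div 2)), 2)"
  show "is_strategy (pow2_arena a b) ?S"
    by (simp add: is_strategy_def pow2_arena_def)
  show "winning_from (pow2_arena a b) (RL \<inter> omega_seqs pow2_colours) ?S 0"
    using winning_from_pow2_arena_iff[OF assms] by (simp add: commit_eq_iff)
qed

lemma pow2_arena_uniform_strategy_loses:
  assumes "0 < a" "0 < b" "is_pow2 a \<noteq> is_pow2 b"
    and "is_strategy (pow2_arena a b) S"
    and "S (0, chain_path a b False) = S (0, chain_path a b True)"
  shows "\<not> winning_from (pow2_arena a b) (RL \<inter> omega_seqs pow2_colours) S 0"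
proof -
  have "S (0, chain_path a b False) \<in> Ed (pow2_arena a b)"
    and "src (S (0, chain_path a b False)) = 1"
    using assms(4) chain_path_is_fpath[OF assms(1,2)] unfolding is_strategy_def
    by (simp_all add: pow2_arena_def)
  then obtain \<beta> where "S (0, chain_path a b False) = (1, commit \<beta>, 2)"
    by (rule edge_from_choice)
  then show ?thesis
    using assms(3,5) winning_from_pow2_arena_iff[OF assms(1,2)]
    by (auto simp: chain_len_def commit_eq_iff)
qed

lemma map_col_chain_path:
  assumes "0 < chain_len a b c"
  shows "map col (chain_path a b c) =
    replicate (chain_len a b c) step_up @ flip_at_pow2 # replicate (chain_len a b c - 1) step_down"
  using assms
  by (intro nth_equalityI) (auto simp: chain_path_def chain_colour_def nth_append nth_Cons')

lemma mem_after_chain_path: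
  assumes "is_memory (pow2_arena a b) M m0 \<delta>" "chromatic (pow2_arena a b) M \<delta>" "0 < a" "0 < b"
  defines "step \<equiv> colour_step (pow2_arena a b) \<delta>"
  shows "mem_after m0 \<delta> (0, chain_path a b c) =
    (step step_down ^^ (chain_len a b c - 1)) (step flip_at_pow2 ((step step_up ^^ chain_len a b c) m0))"
proof -
  have len: "0 < chain_len a b c"
    using assms by (simp add: chain_len_def)
  have "m0 \<in> M"
    using assms(1) by (simp add: is_memory_def)
  moreover have "set (chain_path a b c) \<subseteq> Ed (pow2_arena a b)"
    using chain_edge_in_edges by (auto simp: chain_path_def)
  ultimately show ?thesis
    unfolding mem_after_def step_def
    using chromatic_fold_colours[OF assms(1,2)] by (simp add: map_col_chain_path[OF len])
qed

lemma chromatic_memory_confuses_chains: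
  assumes memory: "is_memory (pow2_arena a b) M m0 \<delta>" "chromatic (pow2_arena a b) M \<delta>"
    and "2 \<le> a" "card M \<le> a - 1" "b = a + fact (card M)"
  shows "mem_after m0 \<delta> (0, chain_path a b False) = mem_after m0 \<delta> (0, chain_path a b True)"
proof -
  define step where "step = colour_step (pow2_arena a b) \<delta>"
  have "finite M" "m0 \<in> M"
    using memory(1) by (simp_all add: is_memory_def)
  have closed: "step (chain_colour a i) ` M \<subseteq> M" if "i < 2 * a" for i
  proof -
    have "chain_edge a b False i \<in> Ed (pow2_arena a b)"
      using that by (intro chain_edge_in_edges) (simp add: chain_len_def)
    from colour_step_in_memory[OF memory(1) _ this] show ?thesis
      by (auto simp: step_def chain_len_def)
  qed
  have up: "step step_up ` M \<subseteq> M" and flip: "step flip_at_pow2 ` M \<subseteq> M"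
    and down: "step step_down ` M \<subseteq> M"
    using closed[of 0] closed[of a] closed[of "Suc a"] assms(3) by (simp_all add: chain_colour_def)
  have "(step step_up ^^ b) m0 = (step step_up ^^ a) m0"
    using funpow_fact_card_period[OF \<open>finite M\<close> up \<open>m0 \<in> M\<close>] assms(3-5) by simp
  moreover have "(step step_down ^^ (b - 1)) r = (step step_down ^^ (a - 1)) r" if "r \<in> M" for r
    using funpow_fact_card_period[OF \<open>finite M\<close> down that, of "a - 1"] assms(3-5) by simp
  moreover have "step flip_at_pow2 ((step step_up ^^ a) m0) \<in> M"
    using flip up \<open>m0 \<in> M\<close> by (auto intro: funpow_in_invariant_set)
  ultimately show ?thesis
    using mem_after_chain_path[OF memory] assms(3,5) by (simp add: step_def chain_len_def)
qed

lemma pow2_arena_defeats_chromatic_memory: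
  assumes "2 \<le> a" "k \<le> a - 1" "b = a + fact k" "is_pow2 a \<noteq> is_pow2 b"
    and memory: "is_memory (pow2_arena a b) M m0 \<delta>" "card M = k" "chromatic (pow2_arena a b) M \<delta>"
    and strategy: "is_strategy (pow2_arena a b) S" "built_on_top (pow2_arena a b) m0 \<delta> S"
  shows "\<not> optimal (pow2_arena a b) (RL \<inter> omega_seqs pow2_colours) S"
proof -
  have "0 < a" "0 < b"
    using assms(1,3) by simp_all
  have "mem_after m0 \<delta> (0, chain_path a b False) = mem_after m0 \<delta> (0, chain_path a b True)"
    using chromatic_memory_confuses_chains[OF memory(1,3)] assms(1-3) memory(2) by simp
  then have "S (0, chain_path a b False) = S (0, chain_path a b True)"
    using strategy(2) chain_path_is_fpath[OF \<open>0 < a\<close> \<open>0 < b\<close>]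
    unfolding built_on_top_def by (simp add: pow2_arena_def)
  then have "\<not> winning_from (pow2_arena a b) (RL \<inter> omega_seqs pow2_colours) S 0"
    using pow2_arena_uniform_strategy_loses \<open>0 < a\<close> \<open>0 < b\<close> assms(4) strategy(1) by blast
  moreover obtain S' where "is_strategy (pow2_arena a b) S'"
    and "winning_from (pow2_arena a b) (RL \<inter> omega_seqs pow2_colours) S' 0"
    using pow2_arena_winnable[OF \<open>0 < a\<close> \<open>0 < b\<close>] .
  ultimately show ?thesis
    unfolding optimal_def by (auto simp: nodes_pow2_arena)
qed

lemma no_chromatic_memory_of_size:
  "\<not> chr_mem_ok pow2_colours (RL \<inter> omega_seqs pow2_colours) k"
proof
  assume ok: "chr_mem_ok pow2_colours (RL \<inter> omega_seqs pow2_colours) k"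
  define a :: nat where "a = 2 ^ fact k"
  define b where "b = a + fact k"
  have "fact k < a"
    by (simp add: a_def)
  then have "k \<le> a - 1"
    using fact_ge_self[of k] by linarith
  have "2 \<le> a"
    unfolding a_def using power_increasing[of 1 "fact k" "2::nat"] fact_ge_1[of k] by simp
  have "is_pow2 a"
    by (auto simp: is_pow2_def a_def)
  moreover have "\<not> is_pow2 b"
    using \<open>fact k < a\<close> by (intro not_is_pow2_between[of "fact k"]) (simp_all add: a_def b_def)
  ultimately have "is_pow2 a \<noteq> is_pow2 b"
    by blast
  moreover have "is_arena pow2_colours (pow2_arena a b)"
    using \<open>2 \<le> a\<close> by (intro pow2_arena_is_arena) (simp_all add: b_def)
  ultimately show False
    using ok pow2_arena_defeats_chromatic_memory[OF \<open>2 \<le> a\<close> \<open>k \<le> a - 1\<close> b_def]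
    unfolding chr_mem_ok_def by blast
qed

theorem proposition2:
  shows "\<exists>C. finite C \<and> C \<subseteq> MonoFun \<and> ChrMem C (RL \<inter> omega_seqs C) = \<infinity>"
proof (intro exI conjI)
  show "finite pow2_colours"
    by (simp add: pow2_colours_def)
  show "pow2_colours \<subseteq> MonoFun"
    by (rule pow2_colours_mono)
  show "ChrMem pow2_colours (RL \<inter> omega_seqs pow2_colours) = \<infinity>"
    using no_chromatic_memory_of_size by (simp add: ChrMem_def)
qed

end
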